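(* Let $\nu\in\mathbb C$, let $I\subset\mathbb R$ be an open interval, and let $a:I\to\mathbb C$ be twice differentiable, nowhere zero, and satisfy $$4a^3\ddot a=(3a^4+2ta^2-\nu)(a^4+2ta^2+\nu).$$ Let $\epsilon\in\{+1,-1\}$ and put $Y=\frac{\nu}{2a^2}-\frac{a^2}{2}-t-\epsilon\frac{\dot a}{a}$. If $y:I\to\mathbb C$ is twice differentiable, nowhere zero, with $y^2=Y$, then $$2y\dot y=-\epsilon\big(\nu+\epsilon-2a^2y^2-y^4-2ty^2\big),$$ and $y$ satisfies the same equation with $\nu$ replaced by $\nu+\epsilon$: $$4y^3\ddot y=(3y^4+2ty^2-(\nu+\epsilon))(y^4+2ty^2+\nu+\epsilon).$$
   Context: Dots denote $d/dt$. *)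

theory Defs
  imports "HOL-Analysis.Analysis"
begin

end

theory Submission
  imports Defs
begin

text \<open>Multiplying \<open>y\<^sup>2 = Y\<close> by \<open>2a\<^sup>2\<close> gives the polynomial relation
\<open>2a\<^sup>2y\<^sup>2 = \<nu> - a\<^sup>4 - 2ta\<^sup>2 - 2\<epsilon>aa'\<close>, which holds on the open set \<open>I\<close> and can therefore be
differentiated. Eliminating \<open>a''\<close> by the equation for \<open>a\<close> and \<open>aa'\<close> by the relation
itself (using \<open>\<epsilon>\<^sup>2 = 1\<close>) leaves the Riccati equation for \<open>y\<close>. Differentiating the
Riccati equation, eliminating \<open>aa'\<close> once more and using
\<open>4y\<^sup>3y'' = 2y\<^sup>2(2y'\<^sup>2 + 2yy'') - (2yy')\<^sup>2\<close> gives the second-order equation. No division by \<open>y\<close>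
occurs and only openness of \<open>I\<close> is used.\<close>

lemma has_vector_derivative_power:
  fixes f :: "real \<Rightarrow> 'a::real_normed_field"
  assumes "(f has_vector_derivative f') (at x within S)"
  shows "((\<lambda>x. f x ^ n) has_vector_derivative (of_nat n * f x ^ (n - 1) * f')) (at x within S)"
  using field_vector_diff_chain_within[OF assms DERIV_power[OF DERIV_ident]]
  by (simp add: o_def mult.commute)

lemma has_vector_derivative_unique_on_open:
  assumes "open S" "t \<in> S" "\<forall>s\<in>S. f s = g s"
    and "(f has_vector_derivative f') (at t)" "(g has_vector_derivative g') (at t)"
  shows "f' = g'"
  using assms by (metis has_vector_derivative_transform_within_open vector_derivative_unique_at)

lemma backlund_riccati_identity:
  fixes A B C u p T \<nu> \<epsilon> :: "'a::field_char_0"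
  assumes "A \<noteq> 0" "\<epsilon>^2 = 1"
    and "4*A^3*C = (3*A^4 + 2*T*A^2 - \<nu>) * (A^4 + 2*T*A^2 + \<nu>)"
    and "2*A^2*u^2 = \<nu> - A^4 - 2*T*A^2 - 2*\<epsilon>*A*B"
    and "4*A*B*u^2 + 4*A^2*u*p = - (4*A^3*B) - 2*A^2 - 4*T*A*B - 2*\<epsilon>*(B^2 + A*C)"
  shows "2*u*p = - \<epsilon> * (\<nu> + \<epsilon> - 2*A^2*u^2 - u^4 - 2*T*u^2)"
proof -
  have "A^2 * (2*u*p - - \<epsilon> * (\<nu> + \<epsilon> - 2*A^2*u^2 - u^4 - 2*T*u^2)) = 0"
    using assms(2-5) by algebra
  then show ?thesis
    using assms(1) by (simp add: eq_neg_iff_add_eq_0)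
qed

lemma backlund_second_order_identity:
  fixes A B u p q T \<nu> \<epsilon> :: "'a::idom"
  assumes "\<epsilon>^2 = 1"
    and "2*A^2*u^2 = \<nu> - A^4 - 2*T*A^2 - 2*\<epsilon>*A*B"
    and "2*u*p = - \<epsilon> * (\<nu> + \<epsilon> - 2*A^2*u^2 - u^4 - 2*T*u^2)"
    and "2*p^2 + 2*u*q = \<epsilon> * (4*A*B*u^2 + 4*A^2*u*p + 4*u^3*p + 2*u^2 + 4*T*u*p)"
  shows "4*u^3*q = (3*u^4 + 2*T*u^2 - (\<nu> + \<epsilon>)) * (u^4 + 2*T*u^2 + (\<nu> + \<epsilon>))"
  using assms by algebra

lemma backlund_riccati:
  fixes \<nu> \<epsilon> :: "'a::real_normed_field" and a a' a'' y y' :: "real \<Rightarrow> 'a"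
  assumes "open I" "\<epsilon>^2 = 1"
    and da: "\<forall>t\<in>I. (a has_vector_derivative a' t) (at t)"
    and dda: "\<forall>t\<in>I. (a' has_vector_derivative a'' t) (at t)"
    and a_nz: "\<forall>t\<in>I. a t \<noteq> 0"
    and a_eq: "\<forall>t\<in>I. 4 * (a t)^3 * a'' t =
        (3 * (a t)^4 + 2 * of_real t * (a t)^2 - \<nu>) * ((a t)^4 + 2 * of_real t * (a t)^2 + \<nu>)"
    and dy: "\<forall>t\<in>I. (y has_vector_derivative y' t) (at t)"
    and rel: "\<forall>t\<in>I. 2 * (a t)^2 * (y t)^2 = \<nu> - (a t)^4 - 2 * of_real t * (a t)^2 - 2 * \<epsilon> * a t * a' t"
  shows "\<forall>t\<in>I. 2 * y t * y' t = - \<epsilon> * (\<nu> + \<epsilon> - 2 * (a t)^2 * (y t)^2 - (y t)^4 - 2 * of_real t * (y t)^2)"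
proof
  fix t assume t: "t \<in> I"
  note da_t = da[rule_format, OF t] and dda_t = dda[rule_format, OF t] and dy_t = dy[rule_format, OF t]
  have "4 * a t * a' t * (y t)^2 + 4 * (a t)^2 * y t * y' t =
      - (4 * (a t)^3 * a' t) - 2 * (a t)^2 - 4 * of_real t * a t * a' t - 2 * \<epsilon> * ((a' t)^2 + a t * a'' t)"
  proof (rule has_vector_derivative_unique_on_open[OF \<open>open I\<close> t rel])
    show "((\<lambda>s. 2 * (a s)^2 * (y s)^2) has_vector_derivative
        4 * a t * a' t * (y t)^2 + 4 * (a t)^2 * y t * y' t) (at t)"
      by (rule has_vector_derivative_eq_rhs,
          (rule derivative_intros has_vector_derivative_power da_t dy_t)+)
        (simp add: algebra_simps eval_nat_numeral)
    show "((\<lambda>s. \<nu> - (a s)^4 - 2 * of_real s * (a s)^2 - 2 * \<epsilon> * a s * a' s) has_vector_derivative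
        - (4 * (a t)^3 * a' t) - 2 * (a t)^2 - 4 * of_real t * a t * a' t - 2 * \<epsilon> * ((a' t)^2 + a t * a'' t)) (at t)"
      by (rule has_vector_derivative_eq_rhs,
          (rule derivative_intros has_vector_derivative_power da_t dda_t DERIV_ident)+)
        (simp add: algebra_simps eval_nat_numeral)
  qed
  then show "2 * y t * y' t = - \<epsilon> * (\<nu> + \<epsilon> - 2 * (a t)^2 * (y t)^2 - (y t)^4 - 2 * of_real t * (y t)^2)"
    using backlund_riccati_identity a_nz a_eq rel t \<open>\<epsilon>^2 = 1\<close> by blast
qed

lemma backlund_second_order:
  fixes \<nu> \<epsilon> :: "'a::real_normed_field" and a a' y y' y'' :: "real \<Rightarrow> 'a"
  assumes "open I" "\<epsilon>^2 = 1"
    and da: "\<forall>t\<in>I. (a has_vector_derivative a' t) (at t)"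
    and dy: "\<forall>t\<in>I. (y has_vector_derivative y' t) (at t)"
    and ddy: "\<forall>t\<in>I. (y' has_vector_derivative y'' t) (at t)"
    and rel: "\<forall>t\<in>I. 2 * (a t)^2 * (y t)^2 = \<nu> - (a t)^4 - 2 * of_real t * (a t)^2 - 2 * \<epsilon> * a t * a' t"
    and riccati: "\<forall>t\<in>I. 2 * y t * y' t = - \<epsilon> * (\<nu> + \<epsilon> - 2 * (a t)^2 * (y t)^2 - (y t)^4 - 2 * of_real t * (y t)^2)"
  shows "\<forall>t\<in>I. 4 * (y t)^3 * y'' t =
      (3 * (y t)^4 + 2 * of_real t * (y t)^2 - (\<nu> + \<epsilon>)) * ((y t)^4 + 2 * of_real t * (y t)^2 + (\<nu> + \<epsilon>))"
proof
  fix t assume t: "t \<in> I"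
  note da_t = da[rule_format, OF t] and dy_t = dy[rule_format, OF t] and ddy_t = ddy[rule_format, OF t]
  have "2 * (y' t)^2 + 2 * y t * y'' t = \<epsilon> * (4 * a t * a' t * (y t)^2 + 4 * (a t)^2 * y t * y' t
      + 4 * (y t)^3 * y' t + 2 * (y t)^2 + 4 * of_real t * y t * y' t)"
  proof (rule has_vector_derivative_unique_on_open[OF \<open>open I\<close> t riccati])
    show "((\<lambda>s. 2 * y s * y' s) has_vector_derivative 2 * (y' t)^2 + 2 * y t * y'' t) (at t)"
      by (rule has_vector_derivative_eq_rhs, (rule derivative_intros dy_t ddy_t)+)
        (simp add: algebra_simps power2_eq_square)
    show "((\<lambda>s. - \<epsilon> * (\<nu> + \<epsilon> - 2 * (a s)^2 * (y s)^2 - (y s)^4 - 2 * of_real s * (y s)^2))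
        has_vector_derivative \<epsilon> * (4 * a t * a' t * (y t)^2 + 4 * (a t)^2 * y t * y' t
          + 4 * (y t)^3 * y' t + 2 * (y t)^2 + 4 * of_real t * y t * y' t)) (at t)"
      by (rule has_vector_derivative_eq_rhs,
          (rule derivative_intros has_vector_derivative_power da_t dy_t DERIV_ident)+)
        (simp add: algebra_simps eval_nat_numeral)
  qed
  then show "4 * (y t)^3 * y'' t =
      (3 * (y t)^4 + 2 * of_real t * (y t)^2 - (\<nu> + \<epsilon>)) * ((y t)^4 + 2 * of_real t * (y t)^2 + (\<nu> + \<epsilon>))"
    using backlund_second_order_identity rel riccati t \<open>\<epsilon>^2 = 1\<close> by blast
qed

theorem mainTheorem13:
  fixes \<nu> \<epsilon> :: complex and I :: "real set"
    and a a' a'' y y' y'' :: "real \<Rightarrow> complex"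
  assumes I_open: "open I" and I_int: "is_interval I"
    and da: "\<forall>t\<in>I. (a has_vector_derivative a' t) (at t)"
    and dda: "\<forall>t\<in>I. (a' has_vector_derivative a'' t) (at t)"
    and a_nz: "\<forall>t\<in>I. a t \<noteq> 0"
    and a_eq: "\<forall>t\<in>I. 4 * (a t)^3 * a'' t =
        (3 * (a t)^4 + 2 * of_real t * (a t)^2 - \<nu>) * ((a t)^4 + 2 * of_real t * (a t)^2 + \<nu>)"
    and eps: "\<epsilon> \<in> {1, -1}"
    and dy: "\<forall>t\<in>I. (y has_vector_derivative y' t) (at t)"
    and ddy: "\<forall>t\<in>I. (y' has_vector_derivative y'' t) (at t)"
    and y_nz: "\<forall>t\<in>I. y t \<noteq> 0"
    and y_sq: "\<forall>t\<in>I. (y t)^2 = \<nu> / (2 * (a t)^2) - (a t)^2 / 2 - of_real t - \<epsilon> * a' t / a t"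
  shows "\<forall>t\<in>I. 2 * y t * y' t = - \<epsilon> * (\<nu> + \<epsilon> - 2 * (a t)^2 * (y t)^2 - (y t)^4 - 2 * of_real t * (y t)^2)
           \<and> 4 * (y t)^3 * y'' t =
             (3 * (y t)^4 + 2 * of_real t * (y t)^2 - (\<nu> + \<epsilon>)) * ((y t)^4 + 2 * of_real t * (y t)^2 + (\<nu> + \<epsilon>))"
proof -
  have eps_sq: "\<epsilon>^2 = 1"
    using eps by auto
  have rel: "\<forall>t\<in>I. 2 * (a t)^2 * (y t)^2 = \<nu> - (a t)^4 - 2 * of_real t * (a t)^2 - 2 * \<epsilon> * a t * a' t"
  proof
    fix t assume t: "t \<in> I"
    then have "2 * (a t)^2 * (y t)^2 = 2 * (a t)^2 * (\<nu> / (2 * (a t)^2) - (a t)^2 / 2 - of_real t - \<epsilon> * a' t / a t)"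
      using y_sq by simp
    also have "\<dots> = \<nu> - (a t)^4 - 2 * of_real t * (a t)^2 - 2 * \<epsilon> * a t * a' t"
      using a_nz t by (simp add: field_simps power2_eq_square power4_eq_xxxx)
    finally show "2 * (a t)^2 * (y t)^2 = \<nu> - (a t)^4 - 2 * of_real t * (a t)^2 - 2 * \<epsilon> * a t * a' t" .
  qed
  have riccati: "\<forall>t\<in>I. 2 * y t * y' t = - \<epsilon> * (\<nu> + \<epsilon> - 2 * (a t)^2 * (y t)^2 - (y t)^4 - 2 * of_real t * (y t)^2)"
    using backlund_riccati[OF I_open eps_sq da dda a_nz a_eq dy rel] .
  then show ?thesis
    using backlund_second_order[OF I_open eps_sq da dy ddy rel riccati] by blast
qed

end
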